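(* Let $\alpha>0$. Suppose the kernel $W(x,y,h)$ is such that $$u^{\alpha*}_\theta(y)=M f_\theta^\alpha(y)u_\theta(y)+L\quad\text{for all }y,$$ for a vector $L\in\mathbb{R}^p$ depending only on $\alpha$ and $h$, and a nonsingular $p\times p$ matrix $M$ depending on $\theta,\alpha,h$, where for each $j=1,\dots,p$ either $\int u_{\theta_j}f_\theta^{1+\alpha}=0$ or the $j$-th column of $M$ does not depend on $\theta$. Then the estimating equation for the minimum DPD$^*$ estimator is the same as that of the minimum DPD estimator, and hence the two estimators are equal.
   Context: $\{f_\theta:\theta\in\Theta\subseteq\mathbb{R}^p\}$ is a parametric family of Lebesgue densities on $\mathbb{R}$, $u_\theta=\nabla_\theta\log f_\theta$ with components $u_{\theta_j}$, and $X_1,\dots,X_n$ is a sample with empirical distribution $G_n$. $W(x,y,h)\ge0$ is a kernel with bandwidth $h>0$, a probability density in $x$ for each $y$; $f^*_\theta(x)=\int W(x,y,h)f_\theta(y)dy$, $g_n^*(x)=\frac1n\sum_iW(x,X_i,h)$, $\tilde u_\theta=\nabla_\theta\log f^*_\theta$, and $u^{\alpha*}_\theta(y)=\int\tilde u_\theta(x)\{f^*_\theta(x)\}^\alpha W(x,y,h)\,dx$. The minimum density power divergence (DPD) estimator solves $\frac1n\sum_{i=1}^nf_\theta^\alpha(X_i)u_\theta(X_i)-\int f_\theta^{1+\alpha}u_\theta=0$ (minimizing $d_\alpha(g,f_\theta)=\int f_\theta^{1+\alpha}-\frac{1+\alpha}{\alpha}\int f_\theta^\alpha g+\frac1\alpha\int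 g^{1+\alpha}$ with $g$ replaced by the empirical distribution). The minimum DPD$^*$ estimator minimizes $d_\alpha(g_n^*,f^*_\theta)$ and solves $\int(f^*_\theta)^\alpha g_n^*\tilde u_\theta-\int(f^*_\theta)^{1+\alpha}\tilde u_\theta=0$, equivalently $\frac1n\sum_{i=1}^nu^{\alpha*}_\theta(X_i)-E_\theta[u^{\alpha*}_\theta(Y)]=0$ with $Y\sim f_\theta$. *)

theory Defs
  imports "HOL-Analysis.Analysis"
begin

definition score :: "(real^'p \<Rightarrow> real \<Rightarrow> real) \<Rightarrow> real^'p \<Rightarrow> real \<Rightarrow> real^'p" where
  "score f \<theta> y = (SOME D. GDERIV (\<lambda>t. ln (f t y)) \<theta> :> D)"

definition fstar :: "(real^'p \<Rightarrow> real \<Rightarrow> real) \<Rightarrow> (real \<Rightarrow> real \<Rightarrow> real \<Rightarrow> real) \<Rightarrow> real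
    \<Rightarrow> real^'p \<Rightarrow> real \<Rightarrow> real" where
  "fstar f W h \<theta> x = (LINT y|lborel. W x y h * f \<theta> y)"

definition ustar :: "(real^'p \<Rightarrow> real \<Rightarrow> real) \<Rightarrow> (real \<Rightarrow> real \<Rightarrow> real \<Rightarrow> real) \<Rightarrow> real \<Rightarrow> real
    \<Rightarrow> real^'p \<Rightarrow> real \<Rightarrow> real^'p" where
  "ustar f W \<alpha> h \<theta> y =
     (LINT x|lborel. (fstar f W h \<theta> x powr \<alpha> * W x y h) *\<^sub>R score (fstar f W h) \<theta> x)"

definition dpd_ee :: "(real^'p \<Rightarrow> real \<Rightarrow> real) \<Rightarrow> real \<Rightarrow> (nat \<Rightarrow> real) \<Rightarrow> nat \<Rightarrow> real^'p \<Rightarrow> real^'p" where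
  "dpd_ee f \<alpha> X n \<theta> =
     (1 / real n) *\<^sub>R (\<Sum>i<n. f \<theta> (X i) powr \<alpha> *\<^sub>R score f \<theta> (X i))
     - (LINT y|lborel. f \<theta> y powr (1 + \<alpha>) *\<^sub>R score f \<theta> y)"

definition dpdstar_ee :: "(real^'p \<Rightarrow> real \<Rightarrow> real) \<Rightarrow> (real \<Rightarrow> real \<Rightarrow> real \<Rightarrow> real) \<Rightarrow> real \<Rightarrow> real
    \<Rightarrow> (nat \<Rightarrow> real) \<Rightarrow> nat \<Rightarrow> real^'p \<Rightarrow> real^'p" where
  "dpdstar_ee f W \<alpha> h X n \<theta> =
     (1 / real n) *\<^sub>R (\<Sum>i<n. ustar f W \<alpha> h \<theta> (X i))
     - (LINT y|lborel. f \<theta> y *\<^sub>R ustar f W \<alpha> h \<theta> y)"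

end

theory Submission
  imports Defs
begin

text \<open>If u^{\<alpha>*}_\<theta> = M_\<theta> (f_\<theta>^\<alpha> u_\<theta>) + L, then both the sample mean and the
  model expectation of u^{\<alpha>*}_\<theta> are the same affine image of the corresponding DPD
  quantities, because f_\<theta> integrates to one. Subtracting them cancels L, so the
  DPD* estimating function is M_\<theta> applied to the DPD estimating function, and
  nonsingularity of M_\<theta> makes their zero sets coincide.\<close>

lemma invertible_matrix_vector_mult_eq_0_iff:
  fixes A :: "'a::field^'n^'n"
  assumes "invertible A"
  shows "A *v x = 0 \<longleftrightarrow> x = 0"
  using assms matrix_left_invertible_ker invertible_left_inverse by fastforce

lemma integral_density_scaleR_affine:
  fixes g :: "'a \<Rightarrow> real" and v :: "'a \<Rightarrow> real^'n"
    and A :: "real^'n^'m" and c :: "real^'m"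
  assumes g_int: "integrable M g" and g_one: "(LINT y|M. g y) = 1"
    and gv_int: "integrable M (\<lambda>y. g y *\<^sub>R v y)"
  shows "(LINT y|M. g y *\<^sub>R (A *v v y + c)) = A *v (LINT y|M. g y *\<^sub>R v y) + c"
proof -
  have "(\<lambda>y. g y *\<^sub>R (A *v v y + c)) = (\<lambda>y. A *v (g y *\<^sub>R v y) + g y *\<^sub>R c)"
    by (simp add: scaleR_right_distrib matrix_vector_mult_scaleR)
  moreover have "integrable M (\<lambda>y. A *v (g y *\<^sub>R v y))"
    by (rule integrable_bounded_linear[OF matrix_vector_mul_bounded_linear gv_int])
  moreover have "integrable M (\<lambda>y. g y *\<^sub>R c)"
    using g_int by (rule integrable_scaleR_left)
  ultimately show ?thesis
    using g_int g_one
    by (simp add: integral_bounded_linear[OF matrix_vector_mul_bounded_linear gv_int])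
qed

lemma mean_affine:
  fixes v :: "nat \<Rightarrow> real^'n" and A :: "real^'n^'m" and c :: "real^'m"
  assumes "n > 0"
  shows "(1 / real n) *\<^sub>R (\<Sum>i<n. A *v v i + c) = A *v ((1 / real n) *\<^sub>R (\<Sum>i<n. v i)) + c"
proof -
  have "(\<Sum>i<n. A *v v i + c) = A *v (\<Sum>i<n. v i) + real n *\<^sub>R c"
    by (simp add: sum.distrib linear_sum[OF matrix_vector_mul_linear] scaleR_conv_of_real)
  then show ?thesis
    using assms by (simp add: matrix_vector_mult_scaleR scaleR_right_distrib)
qed

lemma dpdstar_ee_eq_matrix_vector_mult_dpd_ee:
  fixes f :: "real^'p \<Rightarrow> real \<Rightarrow> real" and A :: "real^'p^'p" and L :: "real^'p"
  assumes n_pos: "n > 0"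
    and dens_nonneg: "\<And>y. f \<theta> y \<ge> 0"
    and dens_int: "integrable lborel (f \<theta>)"
    and dens_one: "(LINT y|lborel. f \<theta> y) = 1"
    and reg: "integrable lborel (\<lambda>y. f \<theta> y powr (1 + \<alpha>) *\<^sub>R score f \<theta> y)"
    and ustar_form: "\<And>y. ustar f W \<alpha> h \<theta> y = A *v (f \<theta> y powr \<alpha> *\<^sub>R score f \<theta> y) + L"
  shows "dpdstar_ee f W \<alpha> h X n \<theta> = A *v dpd_ee f \<alpha> X n \<theta>"
proof -
  define v where "v y = f \<theta> y powr \<alpha> *\<^sub>R score f \<theta> y" for y
  have weighted_v: "f \<theta> y *\<^sub>R v y = f \<theta> y powr (1 + \<alpha>) *\<^sub>R score f \<theta> y" for y
    using dens_nonneg[of y] by (simp add: v_def powr_mult_base)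
  have expectation:
    "(LINT y|lborel. f \<theta> y *\<^sub>R ustar f W \<alpha> h \<theta> y)
       = A *v (LINT y|lborel. f \<theta> y powr (1 + \<alpha>) *\<^sub>R score f \<theta> y) + L"
    using integral_density_scaleR_affine[OF dens_int dens_one, of v A L] reg
    by (simp add: ustar_form weighted_v flip: v_def)
  have mean:
    "(1 / real n) *\<^sub>R (\<Sum>i<n. ustar f W \<alpha> h \<theta> (X i))
       = A *v ((1 / real n) *\<^sub>R (\<Sum>i<n. v (X i))) + L"
    using mean_affine[OF n_pos, of A "v \<circ> X" L] by (simp add: ustar_form flip: v_def)
  show ?thesis
    unfolding dpdstar_ee_def dpd_ee_def expectation mean
    by (simp add: v_def matrix_vector_mult_diff_distrib)
qed

theorem lemma7:
  fixes f :: "real^'p \<Rightarrow> real \<Rightarrow> real"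
    and \<Theta> :: "(real^'p) set"
    and W :: "real \<Rightarrow> real \<Rightarrow> real \<Rightarrow> real"
    and \<alpha> h :: real
    and X :: "nat \<Rightarrow> real" and n :: nat
    and M :: "real^'p \<Rightarrow> real^'p^'p" and L :: "real^'p"
  assumes alpha_pos: "\<alpha> > 0" and h_pos: "h > 0" and n_pos: "n > 0"
    and dens_nonneg: "\<And>\<theta> y. \<theta> \<in> \<Theta> \<Longrightarrow> f \<theta> y \<ge> 0"
    and dens_int: "\<And>\<theta>. \<theta> \<in> \<Theta> \<Longrightarrow> integrable lborel (f \<theta>)"
    and dens_one: "\<And>\<theta>. \<theta> \<in> \<Theta> \<Longrightarrow> (LINT y|lborel. f \<theta> y) = 1"
    and W_nonneg: "\<And>x y. W x y h \<ge> 0"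
    and W_int: "\<And>y. integrable lborel (\<lambda>x. W x y h)"
    and W_one: "\<And>y. (LINT x|lborel. W x y h) = 1"
    and reg: "\<And>\<theta>. \<theta> \<in> \<Theta> \<Longrightarrow>
               integrable lborel (\<lambda>y. f \<theta> y powr (1 + \<alpha>) *\<^sub>R score f \<theta> y)"
    and ustar_form: "\<And>\<theta> y. \<theta> \<in> \<Theta> \<Longrightarrow>
               ustar f W \<alpha> h \<theta> y = M \<theta> *v (f \<theta> y powr \<alpha> *\<^sub>R score f \<theta> y) + L"
    and M_nonsing: "\<And>\<theta>. \<theta> \<in> \<Theta> \<Longrightarrow> invertible (M \<theta>)"
    and M_cols: "\<And>j. (\<forall>\<theta>\<in>\<Theta>. (LINT y|lborel. score f \<theta> y $ j * f \<theta> y powr (1 + \<alpha>)) = 0)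
               \<or> (\<forall>\<theta>\<in>\<Theta>. \<forall>\<theta>'\<in>\<Theta>. column j (M \<theta>) = column j (M \<theta>'))"
  shows "(\<forall>\<theta>\<in>\<Theta>. dpdstar_ee f W \<alpha> h X n \<theta> = 0 \<longleftrightarrow> dpd_ee f \<alpha> X n \<theta> = 0)
       \<and> {\<theta>\<in>\<Theta>. dpdstar_ee f W \<alpha> h X n \<theta> = 0} = {\<theta>\<in>\<Theta>. dpd_ee f \<alpha> X n \<theta> = 0}"
proof -
  have same_roots: "dpdstar_ee f W \<alpha> h X n \<theta> = 0 \<longleftrightarrow> dpd_ee f \<alpha> X n \<theta> = 0"
    if "\<theta> \<in> \<Theta>" for \<theta>
  proof -
    have "dpdstar_ee f W \<alpha> h X n \<theta> = M \<theta> *v dpd_ee f \<alpha> X n \<theta>"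
      by (rule dpdstar_ee_eq_matrix_vector_mult_dpd_ee[where L = L])
        (use n_pos dens_nonneg dens_int dens_one reg ustar_form that in auto)
    then show ?thesis
      using invertible_matrix_vector_mult_eq_0_iff[OF M_nonsing[OF that]] by simp
  qed
  then show ?thesis by blast
qed

end
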